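(* Let $(\Omega_i,\rho_i)$ be a classical model of the information structure $(\mathcal S_i,E_i)$ for $i=1,2$. Then (1) $(\Omega_1\times\Omega_2,\rho_\times)$ is a classical model of the product $(\mathcal S_1,E_1)\times(\mathcal S_2,E_2)$, where $\rho_\times(\langle X_1,X_2\rangle)=\rho_1(X_1)\times\rho_2(X_2)$; and (2) $(\Omega_1\times\Omega_2,\rho_{\amalg})$ is a classical model of the coproduct $(\mathcal S_1,E_1)\amalg(\mathcal S_2,E_2)$, where $\rho_\amalg(\mathbf 1)=\{\Omega_1\times\Omega_2\}$, $\rho_\amalg(X)=\rho_1(X)\times\{\Omega_2\}$ for $X\in\mathrm{Ob}\,\mathcal S_1\setminus\{\mathbf 1\}$ and $\rho_\amalg(X)=\{\Omega_1\}\times\rho_2(X)$ for $X\in\mathrm{Ob}\,\mathcal S_2\setminus\{\mathbf 1\}$.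
   Context: An information structure is a pair $(\mathcal S,E)$, $\mathcal S$ a small category and $E:\mathcal S\to\mathcal{Sets}$ a functor, such that: $\mathcal S$ has a terminal object $\mathbf 1$; $\mathcal S$ is a poset; its nerve is finite dimensional; if $Z\to X$ and $Z\to Y$ then $X\wedge Y$ exists; $E(\mathbf 1)$ is a singleton; for $\pi:X\to Y$, $X\ne Y$, $E(\pi)$ is surjective with $|E(X)|>|E(Y)|$; for every product diagram $X\xleftarrow{\pi}X\wedge Y\xrightarrow{\sigma}Y$ and $(x,y)$, $|E(\pi)^{-1}(x)\cap E(\sigma)^{-1}(y)|\le1$; every $x\in E(X)$ is the $X$-component of some element of $\lim E$. The product $(\mathcal S_1,E_1)\times(\mathcal S_2,E_2)=(\mathcal S,E)$ has objects the pairs $\langle X_1,X_2\rangle$, an arrow $\langle X_1,X_2\rangle\to\langle Y_1,Y_2\rangle$ iff $X_i\to Y_i$ for $i=1,2$, and $E(\langle X_1,X_2\rangle)=E_1(X_1)\times E_2(X_2)$, $E(\langle\pi_1,\pi_2\rangle)=E_1(\pi_1)\times E_2(\pi_2)$. The coproduct has as poset of objects $\mathrm{Ob}\,\mathcal S_1\sqcup\mathrm{Ob}\,\mathcal S_2$ with the two terminal objects identified (arrows those of $\mathcal S_1$ or of $\mathcal S_2$), and $E(X)=E_i(X)$ for $X\in\mathrm{Ob}\,\mathcal S_i$. For a set $\Omega$, $\mathcal O(\Omega)$ is the category of finite partitions of $\Omega$ with $X\to Y$ iff $X$ refines $Y$; the product $XY$ of partitions is their coarsest common refinement. For families $\mathcal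 A,\mathcal B$ of subsets of $\Omega_1,\Omega_2$, $\mathcal A\times\mathcal B=\{A\times B: A\in\mathcal A, B\in\mathcal B\}$. A classical model of $(\mathcal S,E)$ is $(\Omega,\rho)$ with $\rho:\mathcal S\to\mathcal O(\Omega)$ a functor injective on objects, bijections $E(X)\simeq\rho(X)$ for all $X$, and $\rho(X\wedge Y)=\rho(X)\rho(Y)$ whenever $X\wedge Y$ exists. *)

theory Defs
  imports Main "HOL-Library.Equipollence"
begin

text \<open>A small poset category S together with a functor E into Sets.
  Obj: objects; Arr X Y: there is an arrow X -> Y (at most one, as S is a poset);
  Top: the terminal object; Ev X: the set E(X); Emap X Y: the map E(X -> Y).\<close>
record ('a, 'b) infostr =
  Obj  :: "'a set"
  Arr  :: "'a \<Rightarrow> 'a \<Rightarrow> bool"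
  Top  :: "'a"
  Ev   :: "'a \<Rightarrow> 'b set"
  Emap :: "'a \<Rightarrow> 'a \<Rightarrow> 'b \<Rightarrow> 'b"

definition is_meet :: "('a, 'b, 'z) infostr_scheme \<Rightarrow> 'a \<Rightarrow> 'a \<Rightarrow> 'a \<Rightarrow> bool" where
  "is_meet S X Y M \<longleftrightarrow> M \<in> Obj S \<and> Arr S M X \<and> Arr S M Y \<and>
     (\<forall>Z\<in>Obj S. Arr S Z X \<and> Arr S Z Y \<longrightarrow> Arr S Z M)"

definition lim_E :: "('a, 'b, 'z) infostr_scheme \<Rightarrow> ('a \<Rightarrow> 'b) set" where
  "lim_E S = {s. (\<forall>X\<in>Obj S. s X \<in> Ev S X) \<and>
     (\<forall>X\<in>Obj S. \<forall>Y\<in>Obj S. Arr S X Y \<longrightarrow> Emap S X Y (s X) = s Y)}"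

definition information_structure :: "('a, 'b, 'z) infostr_scheme \<Rightarrow> bool" where
  "information_structure S \<longleftrightarrow>
     \<comment> \<open>poset\<close>
     (\<forall>X\<in>Obj S. Arr S X X) \<and>
     (\<forall>X\<in>Obj S. \<forall>Y\<in>Obj S. Arr S X Y \<and> Arr S Y X \<longrightarrow> X = Y) \<and>
     (\<forall>X\<in>Obj S. \<forall>Y\<in>Obj S. \<forall>Z\<in>Obj S. Arr S X Y \<and> Arr S Y Z \<longrightarrow> Arr S X Z) \<and>
     \<comment> \<open>terminal object\<close>
     Top S \<in> Obj S \<and> (\<forall>X\<in>Obj S. Arr S X (Top S)) \<and>
     \<comment> \<open>E is a functor\<close>
     (\<forall>X\<in>Obj S. \<forall>Y\<in>Obj S. Arr S X Y \<longrightarrow> Emap S X Y ` Ev S X \<subseteq> Ev S Y) \<and>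
     (\<forall>X\<in>Obj S. \<forall>x\<in>Ev S X. Emap S X X x = x) \<and>
     (\<forall>X\<in>Obj S. \<forall>Y\<in>Obj S. \<forall>Z\<in>Obj S. Arr S X Y \<and> Arr S Y Z \<longrightarrow>
        (\<forall>x\<in>Ev S X. Emap S Y Z (Emap S X Y x) = Emap S X Z x)) \<and>
     \<comment> \<open>finite dimensional nerve: chains have bounded length\<close>
     (\<exists>n::nat. \<forall>C\<subseteq>Obj S. finite C \<and> (\<forall>X\<in>C. \<forall>Y\<in>C. Arr S X Y \<or> Arr S Y X) \<longrightarrow> card C \<le> n) \<and>
     \<comment> \<open>meets exist for pairs with a common lower bound\<close>
     (\<forall>X\<in>Obj S. \<forall>Y\<in>Obj S. (\<exists>Z\<in>Obj S. Arr S Z X \<and> Arr S Z Y) \<longrightarrow> (\<exists>M. is_meet S X Y M)) \<and>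
     \<comment> \<open>E(1) is a singleton\<close>
     (\<exists>e. Ev S (Top S) = {e}) \<and>
     \<comment> \<open>proper arrows: surjective and strictly decreasing cardinality\<close>
     (\<forall>X\<in>Obj S. \<forall>Y\<in>Obj S. Arr S X Y \<and> X \<noteq> Y \<longrightarrow>
        Emap S X Y ` Ev S X = Ev S Y \<and> Ev S Y \<prec> Ev S X) \<and>
     \<comment> \<open>product condition\<close>
     (\<forall>X\<in>Obj S. \<forall>Y\<in>Obj S. \<forall>M. is_meet S X Y M \<longrightarrow>
        (\<forall>x y. card {z\<in>Ev S M. Emap S M X z = x \<and> Emap S M Y z = y} \<le> 1 \<and>
               finite {z\<in>Ev S M. Emap S M X z = x \<and> Emap S M Y z = y})) \<and>
     \<comment> \<open>every element is a component of some element of lim E\<close>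
     (\<forall>X\<in>Obj S. \<forall>x\<in>Ev S X. \<exists>s\<in>lim_E S. s X = x)"

definition infostr_prod ::
  "('a, 'b) infostr \<Rightarrow> ('c, 'd) infostr \<Rightarrow> ('a \<times> 'c, 'b \<times> 'd) infostr" where
  "infostr_prod S1 S2 =
     \<lparr> Obj = Obj S1 \<times> Obj S2,
       Arr = (\<lambda>(X1, X2) (Y1, Y2). Arr S1 X1 Y1 \<and> Arr S2 X2 Y2),
       Top = (Top S1, Top S2),
       Ev = (\<lambda>(X1, X2). Ev S1 X1 \<times> Ev S2 X2),
       Emap = (\<lambda>(X1, X2) (Y1, Y2). map_prod (Emap S1 X1 Y1) (Emap S2 X2 Y2)) \<rparr>"

text \<open>Coproduct: objects Ob S1 and Ob S2 glued along the terminal objects. The terminal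
  object of S2 is identified with (the image of) the terminal object of S1, so the
  objects are Inl ` Ob S1 and Inr ` (Ob S2 - {1}). The unique arrow X -> 1 for X in S2
  is sent to the unique map into the singleton E(1) = E1(1).\<close>
fun coprod_arr :: "('a, 'b) infostr \<Rightarrow> ('c, 'd) infostr \<Rightarrow> 'a + 'c \<Rightarrow> 'a + 'c \<Rightarrow> bool" where
  "coprod_arr S1 S2 (Inl X) (Inl Y) = Arr S1 X Y"
| "coprod_arr S1 S2 (Inr X) (Inr Y) = Arr S2 X Y"
| "coprod_arr S1 S2 (Inr X) (Inl Y) = (Y = Top S1)"
| "coprod_arr S1 S2 (Inl X) (Inr Y) = False"

fun coprod_ev :: "('a, 'b) infostr \<Rightarrow> ('c, 'd) infostr \<Rightarrow> 'a + 'c \<Rightarrow> ('b + 'd) set" where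
  "coprod_ev S1 S2 (Inl X) = Inl ` Ev S1 X"
| "coprod_ev S1 S2 (Inr X) = Inr ` Ev S2 X"

fun coprod_emap :: "('a, 'b) infostr \<Rightarrow> ('c, 'd) infostr \<Rightarrow> 'a + 'c \<Rightarrow> 'a + 'c \<Rightarrow> 'b + 'd \<Rightarrow> 'b + 'd" where
  "coprod_emap S1 S2 (Inl X) (Inl Y) v = Inl (Emap S1 X Y (projl v))"
| "coprod_emap S1 S2 (Inr X) (Inr Y) v = Inr (Emap S2 X Y (projr v))"
| "coprod_emap S1 S2 (Inr X) (Inl Y) v = Inl (THE e. e \<in> Ev S1 (Top S1))"
| "coprod_emap S1 S2 (Inl X) (Inr Y) v = v"

definition infostr_coprod ::
  "('a, 'b) infostr \<Rightarrow> ('c, 'd) infostr \<Rightarrow> ('a + 'c, 'b + 'd) infostr" where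
  "infostr_coprod S1 S2 =
     \<lparr> Obj = Inl ` Obj S1 \<union> Inr ` (Obj S2 - {Top S2}),
       Arr = coprod_arr S1 S2,
       Top = Inl (Top S1),
       Ev = coprod_ev S1 S2,
       Emap = coprod_emap S1 S2 \<rparr>"

definition finite_partition :: "'w set \<Rightarrow> 'w set set \<Rightarrow> bool" where
  "finite_partition \<Omega> P \<longleftrightarrow> finite P \<and> \<Union>P = \<Omega> \<and> {} \<notin> P \<and>
     (\<forall>A\<in>P. \<forall>B\<in>P. A \<noteq> B \<longrightarrow> A \<inter> B = {})"

definition refines :: "'w set set \<Rightarrow> 'w set set \<Rightarrow> bool" where
  "refines P Q \<longleftrightarrow> (\<forall>A\<in>P. \<exists>B\<in>Q. A \<subseteq> B)"

definition partition_mult :: "'w set set \<Rightarrow> 'w set set \<Rightarrow> 'w set set" where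
  "partition_mult P Q = {A \<inter> B | A B. A \<in> P \<and> B \<in> Q \<and> A \<inter> B \<noteq> {}}"

definition family_times :: "'u set set \<Rightarrow> 'v set set \<Rightarrow> ('u \<times> 'v) set set" where
  "family_times \<A> \<B> = {A \<times> B | A B. A \<in> \<A> \<and> B \<in> \<B>}"

definition classical_model :: "('a, 'b, 'z) infostr_scheme \<Rightarrow> 'w set \<Rightarrow> ('a \<Rightarrow> 'w set set) \<Rightarrow> bool" where
  "classical_model S \<Omega> \<rho> \<longleftrightarrow>
     (\<forall>X\<in>Obj S. finite_partition \<Omega> (\<rho> X)) \<and>
     (\<forall>X\<in>Obj S. \<forall>Y\<in>Obj S. Arr S X Y \<longrightarrow> refines (\<rho> X) (\<rho> Y)) \<and>
     inj_on \<rho> (Obj S) \<and>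
     (\<forall>X\<in>Obj S. \<exists>f. bij_betw f (Ev S X) (\<rho> X)) \<and>
     (\<forall>X\<in>Obj S. \<forall>Y\<in>Obj S. \<forall>M. is_meet S X Y M \<longrightarrow> \<rho> M = partition_mult (\<rho> X) (\<rho> Y))"

definition rho_prod :: "('a \<Rightarrow> 'u set set) \<Rightarrow> ('c \<Rightarrow> 'v set set) \<Rightarrow> 'a \<times> 'c \<Rightarrow> ('u \<times> 'v) set set" where
  "rho_prod \<rho>1 \<rho>2 = (\<lambda>(X1, X2). family_times (\<rho>1 X1) (\<rho>2 X2))"

fun rho_coprod :: "('a, 'b) infostr \<Rightarrow> 'u set \<Rightarrow> ('a \<Rightarrow> 'u set set) \<Rightarrow> 'v set \<Rightarrow> ('c \<Rightarrow> 'v set set)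
    \<Rightarrow> 'a + 'c \<Rightarrow> ('u \<times> 'v) set set" where
  "rho_coprod S1 \<Omega>1 \<rho>1 \<Omega>2 \<rho>2 (Inl X) =
     (if X = Top S1 then {\<Omega>1 \<times> \<Omega>2} else family_times (\<rho>1 X) {\<Omega>2})"
| "rho_coprod S1 \<Omega>1 \<rho>1 \<Omega>2 \<rho>2 (Inr X) = family_times {\<Omega>1} (\<rho>2 X)"

end

theory Submission
  imports Defs
begin

(* The product model is built from rectangles: the blocks A \<times> B with A \<in> \<rho>1 X1 and
  B \<in> \<rho>2 X2 partition \<Omega>1 \<times> \<Omega>2, and refinement, products of partitions and the
  cardinalities of the sets E(X) all factor through the two coordinates; injectivity holds because a
  rectangle with nonempty sides determines its sides.

  For the coproduct, send Inl X to \<langle>X, 1\<rangle> and Inr Y to \<langle>1, Y\<rangle>. This embeds the coproduct into the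
  product, preserving arrows and the meets that exist, and changes E only by a factor E(1), which is
  a singleton. Since \<rho>\<^sub>i(1) = {\<Omega>\<^sub>i}, the coproduct's \<rho> is the product model composed with this
  embedding, and a classical model restricts along any such embedding. *)

lemma information_structure_refl: "information_structure S \<Longrightarrow> X \<in> Obj S \<Longrightarrow> Arr S X X"
  unfolding information_structure_def by simp

lemma information_structure_antisym:
  "\<lbrakk>information_structure S; X \<in> Obj S; Y \<in> Obj S; Arr S X Y; Arr S Y X\<rbrakk> \<Longrightarrow> X = Y"
  unfolding information_structure_def by (elim conjE) metis

lemma information_structure_Top: "information_structure S \<Longrightarrow> Top S \<in> Obj S"
  unfolding information_structure_def by simp

lemma information_structure_arr_Top: "information_structure S \<Longrightarrow> X \<in> Obj S \<Longrightarrow> Arr S X (Top S)"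
  unfolding information_structure_def by simp

lemma information_structure_Ev_Top: "information_structure S \<Longrightarrow> \<exists>e. Ev S (Top S) = {e}"
  unfolding information_structure_def by simp

lemma classical_model_partition:
  "classical_model S \<Omega> \<rho> \<Longrightarrow> X \<in> Obj S \<Longrightarrow> finite_partition \<Omega> (\<rho> X)"
  unfolding classical_model_def by simp

lemma classical_model_refines:
  "\<lbrakk>classical_model S \<Omega> \<rho>; X \<in> Obj S; Y \<in> Obj S; Arr S X Y\<rbrakk> \<Longrightarrow> refines (\<rho> X) (\<rho> Y)"
  unfolding classical_model_def by simp

lemma classical_model_inj_on: "classical_model S \<Omega> \<rho> \<Longrightarrow> inj_on \<rho> (Obj S)"
  unfolding classical_model_def by simp

lemma classical_model_eqpoll: "classical_model S \<Omega> \<rho> \<Longrightarrow> X \<in> Obj S \<Longrightarrow> Ev S X \<approx> \<rho> X"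
  unfolding classical_model_def eqpoll_def by simp

lemma classical_model_meet:
  "\<lbrakk>classical_model S \<Omega> \<rho>; X \<in> Obj S; Y \<in> Obj S; is_meet S X Y M\<rbrakk>
    \<Longrightarrow> \<rho> M = partition_mult (\<rho> X) (\<rho> Y)"
  unfolding classical_model_def by simp

lemma classical_modelI:
  assumes "\<And>X. X \<in> Obj S \<Longrightarrow> finite_partition \<Omega> (\<rho> X)"
    and "\<And>X Y. \<lbrakk>X \<in> Obj S; Y \<in> Obj S; Arr S X Y\<rbrakk> \<Longrightarrow> refines (\<rho> X) (\<rho> Y)"
    and "inj_on \<rho> (Obj S)"
    and "\<And>X. X \<in> Obj S \<Longrightarrow> Ev S X \<approx> \<rho> X"
    and "\<And>X Y M. \<lbrakk>X \<in> Obj S; Y \<in> Obj S; is_meet S X Y M\<rbrakk> \<Longrightarrow> \<rho> M = partition_mult (\<rho> X) (\<rho> Y)"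
  shows "classical_model S \<Omega> \<rho>"
  using assms unfolding classical_model_def eqpoll_def by simp

lemma classical_model_Top:
  assumes "information_structure S" "classical_model S \<Omega> \<rho>"
  shows "\<rho> (Top S) = {\<Omega>}" and "\<Omega> \<noteq> {}"
proof -
  have Top: "Top S \<in> Obj S" using assms(1) by (rule information_structure_Top)
  obtain e where "Ev S (Top S) = {e}" using information_structure_Ev_Top[OF assms(1)] by blast
  then have "\<rho> (Top S) \<approx> {e}"
    using classical_model_eqpoll[OF assms(2) Top] by (metis eqpoll_sym)
  then obtain B where "\<rho> (Top S) = {B}" by (auto simp: eqpoll_singleton_iff)
  with classical_model_partition[OF assms(2) Top]
  show "\<rho> (Top S) = {\<Omega>}" and "\<Omega> \<noteq> {}"
    unfolding finite_partition_def by auto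
qed

lemma finite_partition_nonempty:
  assumes "finite_partition \<Omega> P" "\<Omega> \<noteq> {}"
  shows "{} \<notin> P" "P \<noteq> {}"
  using assms unfolding finite_partition_def by blast+

lemma family_times_eq_image: "family_times \<A> \<B> = (\<lambda>(A, B). A \<times> B) ` (\<A> \<times> \<B>)"
  unfolding family_times_def by auto

lemma finite_partition_family_times:
  assumes P: "finite_partition \<Omega>1 P" and Q: "finite_partition \<Omega>2 Q"
  shows "finite_partition (\<Omega>1 \<times> \<Omega>2) (family_times P Q)"
  unfolding finite_partition_def
proof (intro conjI ballI impI)
  show "finite (family_times P Q)"
    using P Q unfolding finite_partition_def family_times_eq_image by simp
  have "\<Union>(family_times P Q) = \<Union>P \<times> \<Union>Q"
    unfolding family_times_def by auto
  then show "\<Union>(family_times P Q) = \<Omega>1 \<times> \<Omega>2"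
    using P Q unfolding finite_partition_def by simp
  show "{} \<notin> family_times P Q"
    using P Q unfolding finite_partition_def family_times_def by (auto simp: eq_commute[of "{}"])
  fix C D assume "C \<in> family_times P Q" "D \<in> family_times P Q" "C \<noteq> D"
  then obtain A B A' B' where C: "C = A \<times> B" and D: "D = A' \<times> B'"
    and "A \<in> P" "A' \<in> P" "B \<in> Q" "B' \<in> Q"
    unfolding family_times_def by blast
  with \<open>C \<noteq> D\<close> P Q have "A \<inter> A' = {} \<or> B \<inter> B' = {}"
    unfolding finite_partition_def by metis
  then show "C \<inter> D = {}" unfolding C D by auto
qed

lemma refines_family_times:
  assumes "refines P P'" "refines Q Q'"
  shows "refines (family_times P Q) (family_times P' Q')"
  unfolding refines_def
proof
  fix C assume "C \<in> family_times P Q"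
  then obtain A B where "C = A \<times> B" "A \<in> P" "B \<in> Q" unfolding family_times_def by blast
  moreover obtain A' B' where "A' \<in> P'" "A \<subseteq> A'" "B' \<in> Q'" "B \<subseteq> B'"
    using assms \<open>A \<in> P\<close> \<open>B \<in> Q\<close> unfolding refines_def by blast
  ultimately show "\<exists>D\<in>family_times P' Q'. C \<subseteq> D"
    unfolding family_times_def by blast
qed

lemma partition_mult_family_times:
  "partition_mult (family_times P Q) (family_times P' Q') =
     family_times (partition_mult P P') (partition_mult Q Q')"
proof (intro set_eqI iffI)
  fix C assume "C \<in> partition_mult (family_times P Q) (family_times P' Q')"
  then obtain A B A' B' where "C = (A \<times> B) \<inter> (A' \<times> B')" "C \<noteq> {}"
    and "A \<in> P" "B \<in> Q" "A' \<in> P'" "B' \<in> Q'"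
    unfolding partition_mult_def family_times_def by blast
  then have "C = (A \<inter> A') \<times> (B \<inter> B')" "A \<inter> A' \<noteq> {}" "B \<inter> B' \<noteq> {}" and
    "A \<in> P" "B \<in> Q" "A' \<in> P'" "B' \<in> Q'" by auto
  then show "C \<in> family_times (partition_mult P P') (partition_mult Q Q')"
    unfolding partition_mult_def family_times_def by blast
next
  fix C assume "C \<in> family_times (partition_mult P P') (partition_mult Q Q')"
  then obtain A B A' B' where C: "C = (A \<inter> A') \<times> (B \<inter> B')" "A \<inter> A' \<noteq> {}" "B \<inter> B' \<noteq> {}"
    and "A \<in> P" "B \<in> Q" "A' \<in> P'" "B' \<in> Q'"
    unfolding partition_mult_def family_times_def by blast
  moreover from C have "C = (A \<times> B) \<inter> (A' \<times> B')" "C \<noteq> {}" by auto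
  ultimately show "C \<in> partition_mult (family_times P Q) (family_times P' Q')"
    unfolding partition_mult_def family_times_def by blast
qed

lemma image_fst_family_times:
  assumes "{} \<notin> \<B>" "\<B> \<noteq> {}"
  shows "(`) fst ` family_times \<A> \<B> = \<A>"
proof -
  have "(`) fst ` family_times \<A> \<B> = fst ` (\<A> \<times> \<B>)"
    unfolding family_times_eq_image image_image using assms(1)
    by (intro image_cong) (auto split: prod.splits)
  also have "\<dots> = \<A>" using assms(2) by simp
  finally show ?thesis .
qed

lemma image_snd_family_times:
  assumes "{} \<notin> \<A>" "\<A> \<noteq> {}"
  shows "(`) snd ` family_times \<A> \<B> = \<B>"
proof -
  have "(`) snd ` family_times \<A> \<B> = snd ` (\<A> \<times> \<B>)"
    unfolding family_times_eq_image image_image using assms(1)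
    by (intro image_cong) (auto split: prod.splits)
  also have "\<dots> = \<B>" using assms(2) by simp
  finally show ?thesis .
qed

lemma Times_eqpoll_family_times:
  assumes "{} \<notin> \<A>" "{} \<notin> \<B>"
  shows "\<A> \<times> \<B> \<approx> family_times \<A> \<B>"
proof -
  have "inj_on (\<lambda>(A, B). A \<times> B) (\<A> \<times> \<B>)"
    using assms by (auto simp: inj_on_def times_eq_iff)
  then show ?thesis
    unfolding family_times_eq_image by (metis eqpoll_sym inj_on_image_eqpoll_self)
qed

lemma infostr_prod_simps [simp]:
  "Obj (infostr_prod S1 S2) = Obj S1 \<times> Obj S2"
  "Arr (infostr_prod S1 S2) (X1, X2) (Y1, Y2) \<longleftrightarrow> Arr S1 X1 Y1 \<and> Arr S2 X2 Y2"
  "Ev (infostr_prod S1 S2) (X1, X2) = Ev S1 X1 \<times> Ev S2 X2"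
  unfolding infostr_prod_def by simp_all

lemma rho_prod_Pair [simp]: "rho_prod \<rho>1 \<rho>2 (X1, X2) = family_times (\<rho>1 X1) (\<rho>2 X2)"
  unfolding rho_prod_def by simp

lemma is_meet_commute: "is_meet S X Y M \<longleftrightarrow> is_meet S Y X M"
  unfolding is_meet_def by blast

lemma is_meet_of_Arr: "\<lbrakk>X \<in> Obj S; Arr S X X; Arr S X Y\<rbrakk> \<Longrightarrow> is_meet S X Y X"
  unfolding is_meet_def by blast

lemma is_meet_infostr_prod_iff:
  "is_meet (infostr_prod S1 S2) (X1, X2) (Y1, Y2) (M1, M2) \<longleftrightarrow>
     is_meet S1 X1 Y1 M1 \<and> is_meet S2 X2 Y2 M2"
proof
  assume meet: "is_meet (infostr_prod S1 S2) (X1, X2) (Y1, Y2) (M1, M2)"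
  then have M: "M1 \<in> Obj S1" "M2 \<in> Obj S2" and
    arrs: "Arr S1 M1 X1" "Arr S1 M1 Y1" "Arr S2 M2 X2" "Arr S2 M2 Y2"
    unfolding is_meet_def by auto
  have "Arr S1 Z M1" if "Z \<in> Obj S1" "Arr S1 Z X1" "Arr S1 Z Y1" for Z
    using meet that M arrs unfolding is_meet_def by (metis infostr_prod_simps mem_Times_iff fst_conv snd_conv)
  moreover have "Arr S2 Z M2" if "Z \<in> Obj S2" "Arr S2 Z X2" "Arr S2 Z Y2" for Z
    using meet that M arrs unfolding is_meet_def by (metis infostr_prod_simps mem_Times_iff fst_conv snd_conv)
  ultimately show "is_meet S1 X1 Y1 M1 \<and> is_meet S2 X2 Y2 M2"
    using M arrs unfolding is_meet_def by blast
next
  assume "is_meet S1 X1 Y1 M1 \<and> is_meet S2 X2 Y2 M2"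
  then show "is_meet (infostr_prod S1 S2) (X1, X2) (Y1, Y2) (M1, M2)"
    unfolding is_meet_def by auto
qed

lemma inj_on_rho_prod:
  assumes "inj_on \<rho>1 A" "inj_on \<rho>2 B"
    and "\<And>X. X \<in> A \<Longrightarrow> {} \<notin> \<rho>1 X \<and> \<rho>1 X \<noteq> {}"
    and "\<And>X. X \<in> B \<Longrightarrow> {} \<notin> \<rho>2 X \<and> \<rho>2 X \<noteq> {}"
  shows "inj_on (rho_prod \<rho>1 \<rho>2) (A \<times> B)"
proof (rule inj_onI, clarsimp)
  fix X1 X2 Y1 Y2 assume X: "X1 \<in> A" "X2 \<in> B" and Y: "Y1 \<in> A" "Y2 \<in> B"
    and eq: "family_times (\<rho>1 X1) (\<rho>2 X2) = family_times (\<rho>1 Y1) (\<rho>2 Y2)"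
  have "\<rho>1 X1 = \<rho>1 Y1"
    using arg_cong[OF eq, of "image (image fst)"] X Y assms(4) by (simp add: image_fst_family_times)
  moreover have "\<rho>2 X2 = \<rho>2 Y2"
    using arg_cong[OF eq, of "image (image snd)"] X Y assms(3) by (simp add: image_snd_family_times)
  ultimately show "X1 = Y1 \<and> X2 = Y2"
    using X Y assms(1,2) by (auto dest: inj_onD)
qed

lemma classical_model_infostr_prod:
  assumes c1: "classical_model S1 \<Omega>1 \<rho>1" and c2: "classical_model S2 \<Omega>2 \<rho>2"
    and "\<Omega>1 \<noteq> {}" "\<Omega>2 \<noteq> {}"
  shows "classical_model (infostr_prod S1 S2) (\<Omega>1 \<times> \<Omega>2) (rho_prod \<rho>1 \<rho>2)"
proof -
  have blocks1: "{} \<notin> \<rho>1 X" "\<rho>1 X \<noteq> {}" if "X \<in> Obj S1" for X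
    using finite_partition_nonempty classical_model_partition[OF c1 that] \<open>\<Omega>1 \<noteq> {}\<close> by blast+
  have blocks2: "{} \<notin> \<rho>2 X" "\<rho>2 X \<noteq> {}" if "X \<in> Obj S2" for X
    using finite_partition_nonempty classical_model_partition[OF c2 that] \<open>\<Omega>2 \<noteq> {}\<close> by blast+
  show ?thesis
  proof (rule classical_modelI)
    show "finite_partition (\<Omega>1 \<times> \<Omega>2) (rho_prod \<rho>1 \<rho>2 X)" if "X \<in> Obj (infostr_prod S1 S2)" for X
      using that by (cases X)
        (auto intro: finite_partition_family_times classical_model_partition[OF c1]
          classical_model_partition[OF c2])
    show "refines (rho_prod \<rho>1 \<rho>2 X) (rho_prod \<rho>1 \<rho>2 Y)"
      if "X \<in> Obj (infostr_prod S1 S2)" "Y \<in> Obj (infostr_prod S1 S2)"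
        "Arr (infostr_prod S1 S2) X Y" for X Y
      using that by (cases X, cases Y)
        (auto intro: refines_family_times classical_model_refines[OF c1] classical_model_refines[OF c2])
    show "Ev (infostr_prod S1 S2) X \<approx> rho_prod \<rho>1 \<rho>2 X" if "X \<in> Obj (infostr_prod S1 S2)" for X
    proof (cases X)
      case (Pair X1 X2)
      with that have X: "X1 \<in> Obj S1" "X2 \<in> Obj S2" by simp_all
      have "Ev S1 X1 \<times> Ev S2 X2 \<approx> \<rho>1 X1 \<times> \<rho>2 X2"
        using X by (intro times_eqpoll_cong classical_model_eqpoll[OF c1] classical_model_eqpoll[OF c2])
      also have "\<dots> \<approx> family_times (\<rho>1 X1) (\<rho>2 X2)"
        using X by (intro Times_eqpoll_family_times blocks1 blocks2)
      finally show ?thesis using Pair by simp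
    qed
    show "rho_prod \<rho>1 \<rho>2 M = partition_mult (rho_prod \<rho>1 \<rho>2 X) (rho_prod \<rho>1 \<rho>2 Y)"
      if "X \<in> Obj (infostr_prod S1 S2)" "Y \<in> Obj (infostr_prod S1 S2)"
        "is_meet (infostr_prod S1 S2) X Y M" for X Y M
      using that
      by (cases X, cases Y, cases M)
        (auto simp: is_meet_infostr_prod_iff partition_mult_family_times
          classical_model_meet[OF c1] classical_model_meet[OF c2])
    show "inj_on (rho_prod \<rho>1 \<rho>2) (Obj (infostr_prod S1 S2))"
      using blocks1 blocks2 classical_model_inj_on[OF c1] classical_model_inj_on[OF c2]
      by (simp add: inj_on_rho_prod)
  qed
qed

lemma classical_model_comp:
  assumes cm: "classical_model P \<Omega> \<rho>"
    and maps: "\<iota> ` Obj C \<subseteq> Obj P" and inj: "inj_on \<iota> (Obj C)"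
    and mono: "\<And>X Y. \<lbrakk>X \<in> Obj C; Y \<in> Obj C; Arr C X Y\<rbrakk> \<Longrightarrow> Arr P (\<iota> X) (\<iota> Y)"
    and Ev: "\<And>X. X \<in> Obj C \<Longrightarrow> Ev C X \<approx> Ev P (\<iota> X)"
    and meet: "\<And>X Y M. \<lbrakk>X \<in> Obj C; Y \<in> Obj C; is_meet C X Y M\<rbrakk> \<Longrightarrow> is_meet P (\<iota> X) (\<iota> Y) (\<iota> M)"
  shows "classical_model C \<Omega> (\<rho> \<circ> \<iota>)"
proof (rule classical_modelI)
  show "finite_partition \<Omega> ((\<rho> \<circ> \<iota>) X)" if "X \<in> Obj C" for X
    using that maps by (auto intro: classical_model_partition[OF cm])
  show "refines ((\<rho> \<circ> \<iota>) X) ((\<rho> \<circ> \<iota>) Y)" if "X \<in> Obj C" "Y \<in> Obj C" "Arr C X Y" for X Y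
    using that maps mono by (auto intro: classical_model_refines[OF cm])
  show "inj_on (\<rho> \<circ> \<iota>) (Obj C)"
    using comp_inj_on[OF inj inj_on_subset[OF classical_model_inj_on[OF cm] maps]] .
  show "Ev C X \<approx> (\<rho> \<circ> \<iota>) X" if "X \<in> Obj C" for X
  proof -
    have "Ev P (\<iota> X) \<approx> \<rho> (\<iota> X)"
      using that maps by (auto intro: classical_model_eqpoll[OF cm])
    with Ev[OF that] show ?thesis by (simp add: eqpoll_trans)
  qed
  show "(\<rho> \<circ> \<iota>) M = partition_mult ((\<rho> \<circ> \<iota>) X) ((\<rho> \<circ> \<iota>) Y)"
    if "X \<in> Obj C" "Y \<in> Obj C" "is_meet C X Y M" for X Y M
    using that maps classical_model_meet[OF cm _ _ meet[OF that]] by auto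
qed

lemma infostr_coprod_simps [simp]:
  "Inl X \<in> Obj (infostr_coprod S1 S2) \<longleftrightarrow> X \<in> Obj S1"
  "Inr Y \<in> Obj (infostr_coprod S1 S2) \<longleftrightarrow> Y \<in> Obj S2 \<and> Y \<noteq> Top S2"
  "Arr (infostr_coprod S1 S2) = coprod_arr S1 S2"
  "Ev (infostr_coprod S1 S2) = coprod_ev S1 S2"
  unfolding infostr_coprod_def by auto

lemma is_meet_infostr_coprod_Inl_Inl:
  assumes i1: "information_structure S1"
    and meet: "is_meet (infostr_coprod S1 S2) (Inl X) (Inl Y) M"
  obtains M1 where "M = Inl M1" and "is_meet S1 X Y M1"
proof (cases M)
  case (Inl M1)
  have "Arr S1 Z M1" if "Z \<in> Obj S1" "Arr S1 Z X" "Arr S1 Z Y" for Z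
    using meet that unfolding is_meet_def Inl by (metis coprod_arr.simps(1) infostr_coprod_simps(1,3))
  with meet Inl have "is_meet S1 X Y M1"
    unfolding is_meet_def by simp
  with Inl show ?thesis by (rule that)
next
  case (Inr M2)
  \<comment> \<open>then X = Y = Top S1, and Inl (Top S1) is a lower bound of both with no arrow into M\<close>
  with meet have "X = Top S1" "Y = Top S1"
    unfolding is_meet_def by simp_all
  with meet Inr i1 have "coprod_arr S1 S2 (Inl (Top S1)) (Inr M2)"
    unfolding is_meet_def
    by (metis coprod_arr.simps(1) infostr_coprod_simps(1,3) information_structure_Top
        information_structure_refl)
  then show ?thesis by simp
qed

lemma is_meet_infostr_coprod_Inr_Inr:
  assumes i2: "information_structure S2" and X: "X \<in> Obj S2" "X \<noteq> Top S2"
    and meet: "is_meet (infostr_coprod S1 S2) (Inr X) (Inr Y) M"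
  obtains M2 where "M = Inr M2" and "is_meet S2 X Y M2"
proof (cases M)
  case (Inl M1)
  with meet show ?thesis unfolding is_meet_def by simp
next
  case (Inr M2)
  have "Arr S2 Z M2" if Z: "Z \<in> Obj S2" "Arr S2 Z X" "Arr S2 Z Y" for Z
  proof -
    have "Z \<noteq> Top S2"
      using Z X information_structure_antisym[OF i2 X(1) Z(1)] information_structure_arr_Top[OF i2]
      by metis
    with meet Z show ?thesis
      unfolding is_meet_def Inr by (metis coprod_arr.simps(2) infostr_coprod_simps(2,3))
  qed
  with meet Inr have "is_meet S2 X Y M2"
    unfolding is_meet_def by simp
  with Inr show ?thesis by (rule that)
qed

lemma is_meet_infostr_coprod_Inl_Inr:
  assumes i2: "information_structure S2" and Y: "Y \<in> Obj S2" "Y \<noteq> Top S2"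
    and meet: "is_meet (infostr_coprod S1 S2) (Inl X) (Inr Y) M"
  shows "X = Top S1" and "M = Inr Y"
proof -
  obtain M2 where M: "M = Inr M2"
    using meet unfolding is_meet_def by (cases M) simp_all
  with meet show "X = Top S1"
    unfolding is_meet_def by simp
  with meet M Y i2 have "Arr S2 Y M2" "Arr S2 M2 Y" "M2 \<in> Obj S2"
    unfolding is_meet_def by (auto simp: information_structure_refl dest!: bspec[of _ _ "Inr Y"])
  with Y i2 show "M = Inr Y"
    using M information_structure_antisym by metis
qed

fun coprod_to_prod :: "('a, 'b) infostr \<Rightarrow> ('c, 'd) infostr \<Rightarrow> 'a + 'c \<Rightarrow> 'a \<times> 'c" where
  "coprod_to_prod S1 S2 (Inl X) = (X, Top S2)"
| "coprod_to_prod S1 S2 (Inr Y) = (Top S1, Y)"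

lemma is_meet_Top_Top: "information_structure S \<Longrightarrow> is_meet S (Top S) (Top S) (Top S)"
  by (intro is_meet_of_Arr information_structure_Top information_structure_refl)

lemma is_meet_Top_left:
  "information_structure S \<Longrightarrow> Y \<in> Obj S \<Longrightarrow> is_meet S (Top S) Y Y"
  by (subst is_meet_commute)
    (intro is_meet_of_Arr information_structure_refl information_structure_arr_Top)

lemma is_meet_coprod_to_prod:
  assumes i1: "information_structure S1" and i2: "information_structure S2"
    and X: "X \<in> Obj (infostr_coprod S1 S2)" and Y: "Y \<in> Obj (infostr_coprod S1 S2)"
    and meet: "is_meet (infostr_coprod S1 S2) X Y M"
  shows "is_meet (infostr_prod S1 S2)
           (coprod_to_prod S1 S2 X) (coprod_to_prod S1 S2 Y) (coprod_to_prod S1 S2 M)"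
proof (cases X; cases Y)
  fix X1 Y1 assume "X = Inl X1" "Y = Inl Y1"
  with meet i1 obtain M1 where "M = Inl M1" "is_meet S1 X1 Y1 M1"
    by (auto elim: is_meet_infostr_coprod_Inl_Inl)
  with \<open>X = Inl X1\<close> \<open>Y = Inl Y1\<close> i2 show ?thesis
    by (simp add: is_meet_infostr_prod_iff is_meet_Top_Top)
next
  fix X2 Y2 assume "X = Inr X2" "Y = Inr Y2"
  with meet X i2 obtain M2 where "M = Inr M2" "is_meet S2 X2 Y2 M2"
    by (auto elim: is_meet_infostr_coprod_Inr_Inr)
  with \<open>X = Inr X2\<close> \<open>Y = Inr Y2\<close> i1 show ?thesis
    by (simp add: is_meet_infostr_prod_iff is_meet_Top_Top)
next
  fix X1 Y2 assume "X = Inl X1" "Y = Inr Y2"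
  with meet Y i2 have "X1 = Top S1" "M = Inr Y2"
    by (auto dest: is_meet_infostr_coprod_Inl_Inr)
  with \<open>X = Inl X1\<close> \<open>Y = Inr Y2\<close> Y i1 i2 show ?thesis
    by (simp add: is_meet_infostr_prod_iff is_meet_Top_Top is_meet_Top_left)
next
  fix X2 Y1 assume "X = Inr X2" "Y = Inl Y1"
  with meet have "is_meet (infostr_coprod S1 S2) (Inl Y1) (Inr X2) M"
    by (simp add: is_meet_commute)
  with X \<open>X = Inr X2\<close> i2 have "Y1 = Top S1" "M = Inr X2"
    by (auto dest: is_meet_infostr_coprod_Inl_Inr)
  with \<open>X = Inr X2\<close> \<open>Y = Inl Y1\<close> X i1 i2 show ?thesis
    by (simp add: is_meet_infostr_prod_iff is_meet_Top_Top is_meet_Top_left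
      is_meet_commute[of S2 X2 "Top S2"])
qed

lemma Ev_coprod_to_prod_eqpoll:
  assumes "information_structure S1" "information_structure S2"
  shows "Ev (infostr_coprod S1 S2) X \<approx> Ev (infostr_prod S1 S2) (coprod_to_prod S1 S2 X)"
proof -
  obtain e1 e2 where e: "Ev S1 (Top S1) = {e1}" "Ev S2 (Top S2) = {e2}"
    using assms information_structure_Ev_Top by metis
  show ?thesis
  proof (cases X)
    case (Inl X1)
    have "Inl ` Ev S1 X1 \<approx> Ev S1 X1" by (simp add: inj_on_image_eqpoll_self)
    also have "\<dots> \<approx> {e2} \<times> Ev S1 X1" by (simp add: eqpoll_sym times_singleton_eqpoll)
    also have "\<dots> \<approx> Ev S1 X1 \<times> {e2}" by (rule times_commute_eqpoll)
    finally show ?thesis using Inl e by simp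
  next
    case (Inr X2)
    have "Inr ` Ev S2 X2 \<approx> Ev S2 X2" by (simp add: inj_on_image_eqpoll_self)
    also have "\<dots> \<approx> {e1} \<times> Ev S2 X2" by (simp add: eqpoll_sym times_singleton_eqpoll)
    finally show ?thesis using Inr e by simp
  qed
qed

lemma rho_coprod_eq_comp:
  assumes "\<rho>1 (Top S1) = {\<Omega>1}" "\<rho>2 (Top S2) = {\<Omega>2}"
  shows "rho_coprod S1 \<Omega>1 \<rho>1 \<Omega>2 \<rho>2 = rho_prod \<rho>1 \<rho>2 \<circ> coprod_to_prod S1 S2"
proof
  fix X show "rho_coprod S1 \<Omega>1 \<rho>1 \<Omega>2 \<rho>2 X = (rho_prod \<rho>1 \<rho>2 \<circ> coprod_to_prod S1 S2) X"
    using assms by (cases X) (auto simp: family_times_def)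
qed

lemma classical_model_infostr_coprod:
  assumes i1: "information_structure S1" and i2: "information_structure S2"
    and c1: "classical_model S1 \<Omega>1 \<rho>1" and c2: "classical_model S2 \<Omega>2 \<rho>2"
  shows "classical_model (infostr_coprod S1 S2) (\<Omega>1 \<times> \<Omega>2) (rho_coprod S1 \<Omega>1 \<rho>1 \<Omega>2 \<rho>2)"
proof -
  let ?C = "infostr_coprod S1 S2" and ?P = "infostr_prod S1 S2" and ?\<iota> = "coprod_to_prod S1 S2"
  have "classical_model ?P (\<Omega>1 \<times> \<Omega>2) (rho_prod \<rho>1 \<rho>2)"
    using classical_model_infostr_prod[OF c1 c2] classical_model_Top[OF i1 c1]
      classical_model_Top[OF i2 c2] by blast
  then have "classical_model ?C (\<Omega>1 \<times> \<Omega>2) (rho_prod \<rho>1 \<rho>2 \<circ> ?\<iota>)"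
  proof (rule classical_model_comp)
    show "?\<iota> ` Obj ?C \<subseteq> Obj ?P"
      using i1 i2 by (auto simp: infostr_coprod_def information_structure_Top)
    show "inj_on ?\<iota> (Obj ?C)"
      by (auto simp: inj_on_def infostr_coprod_def)
    show "Arr ?P (?\<iota> X) (?\<iota> Y)" if "X \<in> Obj ?C" "Y \<in> Obj ?C" "Arr ?C X Y" for X Y
      using that i1 i2 by (cases X; cases Y)
        (auto simp: information_structure_refl information_structure_arr_Top information_structure_Top)
    show "Ev ?C X \<approx> Ev ?P (?\<iota> X)" for X
      using i1 i2 by (rule Ev_coprod_to_prod_eqpoll)
    show "is_meet ?P (?\<iota> X) (?\<iota> Y) (?\<iota> M)" if "X \<in> Obj ?C" "Y \<in> Obj ?C" "is_meet ?C X Y M" for X Y M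
      using is_meet_coprod_to_prod[OF i1 i2 that] .
  qed
  then show ?thesis
    using rho_coprod_eq_comp classical_model_Top[OF i1 c1] classical_model_Top[OF i2 c2] by metis
qed

theorem proposition2p15:
  fixes S1 :: "('a, 'b) infostr" and S2 :: "('c, 'd) infostr"
    and \<Omega>1 :: "'u set" and \<Omega>2 :: "'v set"
    and \<rho>1 :: "'a \<Rightarrow> 'u set set" and \<rho>2 :: "'c \<Rightarrow> 'v set set"
  assumes "information_structure S1" and "information_structure S2"
    and "classical_model S1 \<Omega>1 \<rho>1" and "classical_model S2 \<Omega>2 \<rho>2"
  shows "classical_model (infostr_prod S1 S2) (\<Omega>1 \<times> \<Omega>2) (rho_prod \<rho>1 \<rho>2) \<and>
         classical_model (infostr_coprod S1 S2) (\<Omega>1 \<times> \<Omega>2) (rho_coprod S1 \<Omega>1 \<rho>1 \<Omega>2 \<rho>2)"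
proof
  have "\<Omega>1 \<noteq> {}" "\<Omega>2 \<noteq> {}"
    using classical_model_Top(2) assms by blast+
  with assms(3,4) show "classical_model (infostr_prod S1 S2) (\<Omega>1 \<times> \<Omega>2) (rho_prod \<rho>1 \<rho>2)"
    by (rule classical_model_infostr_prod)
  show "classical_model (infostr_coprod S1 S2) (\<Omega>1 \<times> \<Omega>2) (rho_coprod S1 \<Omega>1 \<rho>1 \<Omega>2 \<rho>2)"
    using assms by (rule classical_model_infostr_coprod)
qed

end
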